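(* Let $P$ be the feasible set of the rational mixed-integer program $\min\{c^Tx : Ax\le b,\ \ell\le x\le u,\ x_j\in\mathbb{Z} \text{ for all } j\in I\}$, where $A\in\mathbb{Q}^{m\times n}$, $c\in\mathbb{Q}^n$, $b\in\mathbb{Q}^m$, $\ell,u\in(\mathbb{Q}\cup\{\pm\infty\})^n$, $I\subseteq\{1,\dots,n\}$. Let $a^Tx\le \beta$ with $a\in\mathbb{Q}^n$, $\beta\in\mathbb{Q}$ be an inequality valid for $P$, and let $U,L\subseteq\{1,\dots,n\}$ be disjoint index sets such that $u_i<\infty$ for all $i\in U$, $\ell_i>-\infty$ for all $i\in L$, and $a_i=0$ for all $i\notin U\cup L$. Then the inequality $$\sum_{i\in U}\overline{a_i}\,x_i+\sum_{i\in L}\underline{a_i}\,x_i\;\le\;\overline{\beta+\sum_{i\in U,\,u_i>0}(\overline{a_i}-\underline{a_i})\,u_i+\sum_{i\in L,\,\ell_i<0}(\underline{a_i}-\overline{a_i})\,\ell_i}$$ is $\mathbb{F}$-representable and valid for $P$.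
   Context: An inequality is valid for $P$ if every point of $P$ satisfies it. $\mathbb{F}\subseteq\mathbb{Q}$ denotes a fixed set of floating-point numbers (e.g. IEEE double-precision numbers). For $x\in\mathbb{Q}$, $\overline{x}:=\min\{y\in\mathbb{F}: y>x\}$ and $\underline{x}:=\max\{y\in\mathbb{F}: y<x\}$ denote the upper and lower floating-point approximations of $x$ (assumed to exist for all numbers occurring). An inequality $a^Tx\le\beta$ is $\mathbb{F}$-representable if $a\in\mathbb{F}^n$ and $\beta\in\mathbb{F}$. *)

theory Defs
  imports Complex_Main
begin

text \<open>Vectors in Q^n / R^n are functions on nat, with indices 0..n-1 (instead of 1..n).
  Bounds: l j = None means l_j = -infinity, u j = None means u_j = +infinity.\<close>

definition mip_feasible ::
  "(nat \<Rightarrow> nat \<Rightarrow> rat) \<Rightarrow> (nat \<Rightarrow> rat) \<Rightarrow> (nat \<Rightarrow> rat option) \<Rightarrow> (nat \<Rightarrow> rat option)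
   \<Rightarrow> nat set \<Rightarrow> nat \<Rightarrow> nat \<Rightarrow> (nat \<Rightarrow> real) set" where
  "mip_feasible A b l u I m n =
     {x. (\<forall>k<m. (\<Sum>j<n. of_rat (A k j) * x j) \<le> of_rat (b k))
       \<and> (\<forall>j<n. (case l j of None \<Rightarrow> True | Some r \<Rightarrow> of_rat r \<le> x j)
               \<and> (case u j of None \<Rightarrow> True | Some r \<Rightarrow> x j \<le> of_rat r))
       \<and> (\<forall>j\<in>I. x j \<in> \<int>)
       \<and> (\<forall>j\<ge>n. x j = 0)}"

definition valid_for :: "(nat \<Rightarrow> real) set \<Rightarrow> nat \<Rightarrow> (nat \<Rightarrow> rat) \<Rightarrow> rat \<Rightarrow> bool" where
  "valid_for P n a \<beta> = (\<forall>x\<in>P. (\<Sum>i<n. of_rat (a i) * x i) \<le> of_rat \<beta>)"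

definition F_representable :: "rat set \<Rightarrow> nat \<Rightarrow> (nat \<Rightarrow> rat) \<Rightarrow> rat \<Rightarrow> bool" where
  "F_representable F n a \<beta> = ((\<forall>i<n. a i \<in> F) \<and> \<beta> \<in> F)"

definition fup :: "rat set \<Rightarrow> rat \<Rightarrow> rat" where
  "fup F x = (LEAST y. y \<in> F \<and> x < y)"

definition fdown :: "rat set \<Rightarrow> rat \<Rightarrow> rat" where
  "fdown F x = (GREATEST y. y \<in> F \<and> y < x)"

definition has_fup :: "rat set \<Rightarrow> rat \<Rightarrow> bool" where
  "has_fup F x = (\<exists>y. y \<in> F \<and> x < y \<and> (\<forall>z. z \<in> F \<and> x < z \<longrightarrow> y \<le> z))"

definition has_fdown :: "rat set \<Rightarrow> rat \<Rightarrow> bool" where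
  "has_fdown F x = (\<exists>y. y \<in> F \<and> y < x \<and> (\<forall>z. z \<in> F \<and> z < x \<longrightarrow> z \<le> y))"

definition safe_coeff :: "rat set \<Rightarrow> nat set \<Rightarrow> nat set \<Rightarrow> (nat \<Rightarrow> rat) \<Rightarrow> nat \<Rightarrow> rat" where
  "safe_coeff F U L a i =
     (if i \<in> U then fup F (a i) else if i \<in> L then fdown F (a i) else 0)"

definition safe_rhs_arg ::
  "rat set \<Rightarrow> nat set \<Rightarrow> nat set \<Rightarrow> (nat \<Rightarrow> rat) \<Rightarrow> rat \<Rightarrow> (nat \<Rightarrow> rat option) \<Rightarrow> (nat \<Rightarrow> rat option) \<Rightarrow> rat" where
  "safe_rhs_arg F U L a \<beta> l u =
     \<beta> + (\<Sum>i\<in>{i\<in>U. the (u i) > 0}. (fup F (a i) - fdown F (a i)) * the (u i))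
       + (\<Sum>i\<in>{i\<in>L. the (l i) < 0}. (fdown F (a i) - fup F (a i)) * the (l i))"

end

theory Submission
  imports Defs
begin

text \<open>Rounding \<open>a\<^sub>i\<close> up to the float \<open>a'\<^sub>i\<close> adds \<open>(a'\<^sub>i - a\<^sub>i) x\<^sub>i\<close> to the left-hand side, and
  the finite bound \<open>x\<^sub>i \<le> u\<^sub>i\<close> caps this by \<open>(a'\<^sub>i - a\<^sub>i) u\<^sub>i\<close>, which is nonpositive if
  \<open>u\<^sub>i \<le> 0\<close> and at most the width of the float interval around \<open>a\<^sub>i\<close> times \<open>u\<^sub>i\<close> otherwise;
  rounding down is paid for by \<open>\<ell>\<^sub>i\<close> in the same way. So the left-hand side grows by at
  most the sum of these prices, which the new right-hand side absorbs, and rounding that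
  right-hand side up only weakens the inequality further.\<close>

lemma fup_in_greater:
  assumes "has_fup F x"
  shows "fup F x \<in> F" and "x < fup F x"
proof -
  from assms obtain y where y: "y \<in> F" "x < y" "\<forall>z. z \<in> F \<and> x < z \<longrightarrow> y \<le> z"
    unfolding has_fup_def by blast
  have "fup F x = y"
    unfolding fup_def by (rule Least_equality) (use y in auto)
  with y show "fup F x \<in> F" and "x < fup F x" by simp_all
qed

lemma fdown_in_less:
  assumes "has_fdown F x"
  shows "fdown F x \<in> F" and "fdown F x < x"
proof -
  from assms obtain y where y: "y \<in> F" "y < x" "\<forall>z. z \<in> F \<and> z < x \<longrightarrow> z \<le> y"
    unfolding has_fdown_def by blast
  have "fdown F x = y"
    unfolding fdown_def by (rule Greatest_equality) (use y in auto)
  with y show "fdown F x \<in> F" and "fdown F x < x" by simp_all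
qed

lemma round_up_mult_le:
  fixes dn a up x r :: "'a::linordered_idom"
  assumes "dn \<le> a" "a \<le> up" "x \<le> r"
  shows "up * x \<le> a * x + (if 0 < r then (up - dn) * r else 0)"
proof -
  have "(up - a) * x \<le> (up - a) * r"
    using assms by (simp add: mult_left_mono)
  moreover have "(up - a) * r \<le> (if 0 < r then (up - dn) * r else 0)"
    using assms by (auto simp: mult_right_mono mult_nonneg_nonpos)
  ultimately show ?thesis
    by (simp add: algebra_simps)
qed

lemma round_down_mult_le:
  fixes dn a up x r :: "'a::linordered_idom"
  assumes "dn \<le> a" "a \<le> up" "r \<le> x"
  shows "dn * x \<le> a * x + (if r < 0 then (dn - up) * r else 0)"
  using round_up_mult_le[of "- up" "- a" "- dn" "- x" "- r"] assms
  by (auto simp: algebra_simps split: if_splits)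

definition rounding_slack ::
  "rat set \<Rightarrow> nat set \<Rightarrow> nat set \<Rightarrow> (nat \<Rightarrow> rat) \<Rightarrow> (nat \<Rightarrow> rat option) \<Rightarrow> (nat \<Rightarrow> rat option)
   \<Rightarrow> nat \<Rightarrow> rat" where
  "rounding_slack F U L a l u i =
     (if i \<in> U \<and> 0 < the (u i) then (fup F (a i) - fdown F (a i)) * the (u i)
      else if i \<in> L \<and> the (l i) < 0 then (fdown F (a i) - fup F (a i)) * the (l i)
      else 0)"

lemma safe_rhs_arg_eq_sum_rounding_slack:
  assumes "U \<subseteq> {..<n}" "L \<subseteq> {..<n}" "U \<inter> L = {}"
  shows "safe_rhs_arg F U L a \<beta> l u = \<beta> + (\<Sum>i<n. rounding_slack F U L a l u i)"
proof -
  have restrict: "(\<Sum>i\<in>{i \<in> S. P i}. f i) = (\<Sum>i<n. if i \<in> S \<and> P i then f i else 0)"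
    if "S \<subseteq> {..<n}" for S P and f :: "nat \<Rightarrow> rat"
  proof -
    have "{i \<in> S. P i} = {i \<in> {..<n}. i \<in> S \<and> P i}"
      using that by auto
    then show ?thesis
      by (simp only: sum.inter_filter[OF finite_lessThan])
  qed
  have "rounding_slack F U L a l u i =
      (if i \<in> U \<and> 0 < the (u i) then (fup F (a i) - fdown F (a i)) * the (u i) else 0)
      + (if i \<in> L \<and> the (l i) < 0 then (fdown F (a i) - fup F (a i)) * the (l i) else 0)" for i
    using assms(3) by (auto simp: rounding_slack_def)
  then show ?thesis
    by (simp add: safe_rhs_arg_def restrict[OF assms(1)] restrict[OF assms(2)] sum.distrib)
qed

lemma safe_coeff_mult_le:
  fixes y :: real
  assumes "U \<inter> L = {}"
    and "\<forall>i\<in>U. u i \<noteq> None" and "\<forall>i\<in>L. l i \<noteq> None"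
    and "i \<notin> U \<union> L \<Longrightarrow> a i = 0"
    and "i \<in> U \<union> L \<Longrightarrow> has_fup F (a i) \<and> has_fdown F (a i)"
    and "case l i of None \<Rightarrow> True | Some r \<Rightarrow> of_rat r \<le> y"
    and "case u i of None \<Rightarrow> True | Some r \<Rightarrow> y \<le> of_rat r"
  shows "of_rat (safe_coeff F U L a i) * y \<le> of_rat (a i) * y + of_rat (rounding_slack F U L a l u i)"
proof (cases "i \<in> U \<union> L")
  case True
  then have "fdown F (a i) < a i" "a i < fup F (a i)"
    using assms(5) fup_in_greater(2) fdown_in_less(2) by auto
  then have rounded: "real_of_rat (fdown F (a i)) \<le> of_rat (a i)" "real_of_rat (a i) \<le> of_rat (fup F (a i))"
    by (simp_all add: of_rat_less_eq)
  consider "i \<in> U" "i \<notin> L" | "i \<in> L" "i \<notin> U"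
    using True assms(1) by blast
  then show ?thesis
  proof cases
    case 1
    with assms(2,7) obtain r where "u i = Some r" "y \<le> of_rat r" by auto
    with 1 rounded show ?thesis
      using round_up_mult_le[of "of_rat (fdown F (a i))" "of_rat (a i)" "of_rat (fup F (a i))" y "of_rat r"]
      by (simp add: safe_coeff_def rounding_slack_def of_rat_mult of_rat_diff split: if_splits)
  next
    case 2
    with assms(3,6) obtain r where "l i = Some r" "of_rat r \<le> y" by auto
    with 2 rounded show ?thesis
      using round_down_mult_le[of "of_rat (fdown F (a i))" "of_rat (a i)" "of_rat (fup F (a i))" "of_rat r" y]
      by (simp add: safe_coeff_def rounding_slack_def of_rat_mult of_rat_diff split: if_splits)
  qed
next
  case False
  with assms(4) show ?thesis
    by (simp add: safe_coeff_def rounding_slack_def)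
qed

theorem lemma1:
  fixes F :: "rat set" and A :: "nat \<Rightarrow> nat \<Rightarrow> rat" and b :: "nat \<Rightarrow> rat"
    and c :: "nat \<Rightarrow> rat"
    and l u :: "nat \<Rightarrow> rat option" and I U L :: "nat set" and m n :: nat
    and a :: "nat \<Rightarrow> rat" and \<beta> :: rat
  assumes zero_F: "0 \<in> F"
    and I_sub: "I \<subseteq> {..<n}"
    and valid: "valid_for (mip_feasible A b l u I m n) n a \<beta>"
    and U_sub: "U \<subseteq> {..<n}" and L_sub: "L \<subseteq> {..<n}"
    and disj: "U \<inter> L = {}"
    and u_fin: "\<forall>i\<in>U. u i \<noteq> None"
    and l_fin: "\<forall>i\<in>L. l i \<noteq> None"
    and a_zero: "\<forall>i<n. i \<notin> U \<union> L \<longrightarrow> a i = 0"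
    and ex_coeff: "\<forall>i\<in>U \<union> L. has_fup F (a i) \<and> has_fdown F (a i)"
    and ex_rhs: "has_fup F (safe_rhs_arg F U L a \<beta> l u)"
  shows "F_representable F n (safe_coeff F U L a) (fup F (safe_rhs_arg F U L a \<beta> l u))
       \<and> valid_for (mip_feasible A b l u I m n) n (safe_coeff F U L a)
           (fup F (safe_rhs_arg F U L a \<beta> l u))"
proof
  show "F_representable F n (safe_coeff F U L a) (fup F (safe_rhs_arg F U L a \<beta> l u))"
    using zero_F ex_coeff fup_in_greater(1)[OF ex_rhs] fup_in_greater(1) fdown_in_less(1)
    by (auto simp: F_representable_def safe_coeff_def)
next
  let ?s = "rounding_slack F U L a l u"
  show "valid_for (mip_feasible A b l u I m n) n (safe_coeff F U L a)
          (fup F (safe_rhs_arg F U L a \<beta> l u))"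
    unfolding valid_for_def
  proof
    fix x assume x: "x \<in> mip_feasible A b l u I m n"
    have "(\<Sum>i<n. of_rat (safe_coeff F U L a i) * x i) \<le> (\<Sum>i<n. of_rat (a i) * x i + of_rat (?s i))"
      using x disj u_fin l_fin a_zero ex_coeff
      by (intro sum_mono safe_coeff_mult_le) (auto simp: mip_feasible_def)
    also have "\<dots> \<le> of_rat \<beta> + of_rat (\<Sum>i<n. ?s i)"
      using valid x by (simp add: valid_for_def sum.distrib of_rat_sum)
    also have "\<dots> = of_rat (safe_rhs_arg F U L a \<beta> l u)"
      by (simp add: safe_rhs_arg_eq_sum_rounding_slack[OF U_sub L_sub disj] of_rat_add)
    also have "\<dots> \<le> of_rat (fup F (safe_rhs_arg F U L a \<beta> l u))"
      using fup_in_greater(2)[OF ex_rhs] by (simp add: of_rat_less_eq)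
    finally show "(\<Sum>i<n. of_rat (safe_coeff F U L a i) * x i)
        \<le> of_rat (fup F (safe_rhs_arg F U L a \<beta> l u))" .
  qed
qed

end
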